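(* Let $X$ be a set with at least two elements and let $A_1,\dots,A_m$ be finite subsets of the free monoid $\langle X\rangle$ such that all elements of $A_i$ have the same degree $n_i$ ($i=1,\dots,m$). Then there exist an integer $t\geq\max\{n_i\mid 1\le i\le m\}$ and elements $\nu_1,\dots,\nu_m\in\langle X\rangle$ with $\deg\nu_i=t-n_i$ such that the sets $A_1\nu_1,\dots,A_m\nu_m$ are pairwise disjoint.
   Context: The degree of a monomial $x_1x_2\cdots x_n\in\langle X\rangle$ ($x_i\in X$) is $n$. $A_i\nu_i=\{a\nu_i\mid a\in A_i\}$. *)

theory Defs
  imports Main
begin

text \<open>The free monoid over X is modelled as the set of lists over X
(concatenation, empty word as unit); the degree of a monomial is its length.\<close>

abbreviation free_monoid :: "'a set \<Rightarrow> 'a list set" where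
  "free_monoid X \<equiv> lists X"

abbreviation deg :: "'a list \<Rightarrow> nat" where
  "deg w \<equiv> length w"

definition right_mult :: "'a list set \<Rightarrow> 'a list \<Rightarrow> 'a list set" where
  "right_mult A \<nu> = (\<lambda>a. a @ \<nu>) ` A"

end

theory Submission
  imports Defs
begin

(* Pick two letters x ~= y and tag the i-th set by the word y^i x^(m-i), which has
   length m and contains exactly i letters y, so distinct sets get distinct tags of equal
   length. Put t = n_1 + ... + n_m + m and let nu_i be the tag of A_i preceded by enough
   letters x to have degree t - n_i. A common element a nu_i = b nu_j would have both tags
   as its suffix of length m, forcing i = j. *)

lemma count_list_replicate_append_replicate:
  assumes "x \<noteq> y"
  shows "count_list (replicate i y @ replicate k x) y = i"
  using assms by (induction i) auto

lemma inj_replicate_tags: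
  assumes "x \<noteq> y"
  shows "inj (\<lambda>i. replicate i y @ replicate (m - i) x)"
  by (rule inj_onI) (metis assms count_list_replicate_append_replicate)

lemma right_mult_disjoint_if_suffixes_differ:
  assumes "length s = length s'" and "s \<noteq> s'"
  shows "right_mult A (p @ s) \<inter> right_mult B (q @ s') = {}"
  using assms unfolding right_mult_def
  by (auto simp flip: append_assoc dest: append_eq_append_conv[THEN iffD1, rotated])

theorem mainTheorem6:
  fixes X :: "'a set" and A :: "nat \<Rightarrow> 'a list set" and n :: "nat \<Rightarrow> nat" and m :: nat
  assumes X2: "\<exists>x\<in>X. \<exists>y\<in>X. x \<noteq> y"
    and Asub: "\<And>i. i < m \<Longrightarrow> A i \<subseteq> free_monoid X"
    and Afin: "\<And>i. i < m \<Longrightarrow> finite (A i)"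
    and Adeg: "\<And>i a. i < m \<Longrightarrow> a \<in> A i \<Longrightarrow> deg a = n i"
  shows "\<exists>t::nat. (\<forall>i<m. n i \<le> t) \<and>
           (\<exists>\<nu> :: nat \<Rightarrow> 'a list.
              (\<forall>i<m. \<nu> i \<in> free_monoid X \<and> deg (\<nu> i) = t - n i) \<and>
              (\<forall>i<m. \<forall>j<m. i \<noteq> j \<longrightarrow> right_mult (A i) (\<nu> i) \<inter> right_mult (A j) (\<nu> j) = {}))"
proof -
  obtain x y where xy: "x \<in> X" "y \<in> X" "x \<noteq> y" using X2 by blast
  define tag where "tag i = replicate i y @ replicate (m - i) x" for i
  define t where "t = (\<Sum>i<m. n i) + m"
  define \<nu> where "\<nu> i = replicate (t - n i - m) x @ tag i" for i
  have n_le: "n i + m \<le> t" if "i < m" for i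
    using member_le_sum[of i "{..<m}" n] that by (simp add: t_def)
  have "\<nu> i \<in> free_monoid X \<and> deg (\<nu> i) = t - n i" if "i < m" for i
    using xy n_le[OF that] that by (auto simp: \<nu>_def tag_def)
  moreover have "right_mult (A i) (\<nu> i) \<inter> right_mult (A j) (\<nu> j) = {}"
    if "i < m" "j < m" "i \<noteq> j" for i j
    unfolding \<nu>_def
  proof (rule right_mult_disjoint_if_suffixes_differ)
    show "length (tag i) = length (tag j)" using that by (simp add: tag_def)
    show "tag i \<noteq> tag j"
      using inj_replicate_tags[OF xy(3), of m] \<open>i \<noteq> j\<close>
      unfolding tag_def by (meson injD)
  qed
  ultimately show ?thesis
    using n_le by (intro exI[of _ t] conjI exI[of _ \<nu>]) (auto intro: order_trans[OF le_add1 n_le])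
qed

end
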